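(* Let $C\subseteq\mathbb{F}_q^n$ be a constant weight linear code of dimension $k$, and let $0\leqslant i\leqslant k$. Then \[ N_i=\{\mathrm{Supp}(C') : C' \text{ is a subcode of } C \text{ of dimension } i\}. \]
   Context: A subcode is a linear subspace; $\mathrm{Supp}(D)=\{x: \exists d\in D,\ d_x\neq0\}$. A constant weight code is a linear code all of whose non-zero codewords have the same number of non-zero coordinates. Let $H_C$ be a parity check matrix of $C$ ($c\in C$ iff $cH_C^t=0$); the associated matroid has ground set $E=\{1,\dots,n\}$ and independent sets the subsets indexing linearly independent columns of $H_C$; $\mathrm{rank}(\sigma)$ is the maximal size of an independent subset of $\sigma$. $N_i$ denotes the set of inclusion-minimal subsets $\sigma\subseteq E$ with $\#\sigma-\mathrm{rank}(\sigma)=i$. *)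

theory Defs
  imports "HOL-Analysis.Analysis"
begin

text \<open>Vectors of the ambient space F_q^n are elements of 'a^'n with 'a a finite field and
  the coordinate index set E = UNIV :: 'n set (finite, n = CARD('n)).
  A parity check matrix H :: 'a^'n^'m satisfies: c in C iff H *v c = 0 (i.e. c H^t = 0).\<close>

definition Supp :: "('a::zero ^ 'n) set \<Rightarrow> 'n set" where
  "Supp D = {x. \<exists>d\<in>D. d $ x \<noteq> 0}"

definition wt :: "'a::zero ^ 'n \<Rightarrow> nat" where
  "wt c = card {x. c $ x \<noteq> 0}"

definition constant_weight :: "('a::zero ^ 'n) set \<Rightarrow> bool" where
  "constant_weight C \<longleftrightarrow> (\<forall>c\<in>C. \<forall>d\<in>C. c \<noteq> 0 \<longrightarrow> d \<noteq> 0 \<longrightarrow> wt c = wt d)"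

text \<open>Independent sets of the matroid of H: sets of column indices whose columns are
  linearly independent (as a family, so repeated columns count as dependent).\<close>
definition mindep :: "'a::field ^ 'n ^ 'm \<Rightarrow> 'n set \<Rightarrow> bool" where
  "mindep H \<tau> \<longleftrightarrow> inj_on (\<lambda>j. column j H) \<tau> \<and> vec.independent ((\<lambda>j. column j H) ` \<tau>)"

definition mrank :: "'a::field ^ 'n ^ 'm \<Rightarrow> 'n set \<Rightarrow> nat" where
  "mrank H \<sigma> = Max {card \<tau> | \<tau>. \<tau> \<subseteq> \<sigma> \<and> mindep H \<tau>}"

definition nullity :: "'a::field ^ 'n ^ 'm \<Rightarrow> 'n set \<Rightarrow> nat" where
  "nullity H \<sigma> = card \<sigma> - mrank H \<sigma>"

definition N :: "'a::field ^ 'n ^ 'm \<Rightarrow> nat \<Rightarrow> 'n set set" where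
  "N H i = {\<sigma>. nullity H \<sigma> = i \<and> (\<forall>\<tau>. \<tau> \<subset> \<sigma> \<longrightarrow> nullity H \<tau> \<noteq> i)}"

end

theory Submission
  imports Defs
begin

text \<open>For \<open>\<sigma> \<subseteq> E\<close>, rank-nullity for \<open>H\<close> restricted to the vectors supported in \<open>\<sigma>\<close>
  shows that the nullity of \<open>\<sigma>\<close> in the matroid of \<open>H\<close> is the dimension of the subcode
  \<open>C(\<sigma>)\<close> of codewords supported in \<open>\<sigma>\<close>; hence a minimal \<open>\<sigma>\<close> of nullity \<open>i\<close> is the
  support of \<open>C(\<sigma>)\<close>. Conversely, double counting nonzero entries gives
  \<open>q \<cdot> \<Sum>wt = (q - 1) \<cdot> |D| \<cdot> |Supp D|\<close> for every subcode \<open>D\<close>, so in a constant weight code the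
  support determines \<open>|D|\<close> and no subcode is strictly contained in another with the same
  support. Thus \<open>D = C(Supp D)\<close>, and comparing dimensions shows that \<open>Supp D\<close> is minimal.\<close>

context finite_dimensional_vector_space
begin

lemma complement_subspace_exists:
  assumes K: "subspace K" "K \<subseteq> V" and V: "subspace V"
  obtains W where "subspace W" "W \<subseteq> V" "{x + y |x y. x \<in> K \<and> y \<in> W} = V" "K \<inter> W \<subseteq> {0}"
proof -
  obtain BK where BK: "BK \<subseteq> K" "independent BK" "K \<subseteq> span BK" "card BK = dim K"
    using basis_exists[of K] by blast
  obtain B where B: "BK \<subseteq> B" "B \<subseteq> V" "independent B" "V \<subseteq> span B"
    using maximal_independent_subset_extend[of BK V] BK K by blast
  have "finite B" using B(3) independent_bound_general by blast
  define W where "W = span (B - BK)"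
  have "B - BK \<subseteq> V" using B(2) by blast
  then have W: "subspace W" "W \<subseteq> V"
    unfolding W_def using V by (simp_all add: span_minimal)
  have "span B = V" using B V by (simp add: span_subspace)
  then have "dim V = card B"
    using dim_span_eq_card_independent[OF B(3)] by simp
  moreover have "dim W \<le> card B - card BK"
    using dim_le_card[of "B - BK" "B - BK"] \<open>finite B\<close> B(1)
    by (simp add: W_def card_Diff_subset finite_subset span_superset)
  moreover have KW_sum: "{x + y |x y. x \<in> K \<and> y \<in> W} = V"
  proof
    show "{x + y |x y. x \<in> K \<and> y \<in> W} \<subseteq> V" using K W V by (auto intro: subspace_add)
    have "span BK = K" using BK K by (simp add: span_subspace)
    moreover have "V \<subseteq> span (BK \<union> (B - BK))" using B by (simp add: Un_absorb1)
    ultimately show "V \<subseteq> {x + y |x y. x \<in> K \<and> y \<in> W}" unfolding span_Un W_def by blast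
  qed
  moreover have "dim (K \<inter> W) + dim V = dim K + dim W"
    using dim_sums_Int[OF K(1) W(1)] KW_sum by simp
  moreover have "card BK \<le> card B" using \<open>finite B\<close> B(1) by (rule card_mono)
  ultimately have "dim (K \<inter> W) = 0"
    using BK(4) by linarith
  with W KW_sum show ?thesis using that by simp
qed

end

context finite_dimensional_vector_space_pair_1
begin

lemma rank_nullity:
  assumes f: "Vector_Spaces.linear (*a) (*b) f" and V: "vs1.subspace V"
  shows "vs1.dim V = vs1.dim {x\<in>V. f x = 0} + vs2.dim (f ` V)"
proof -
  interpret f: Vector_Spaces.linear "(*a)" "(*b)" f by (fact f)
  define K where "K = {x\<in>V. f x = 0}"
  have K: "vs1.subspace K" "K \<subseteq> V"
    using V by (auto simp: K_def vs1.subspace_def f.add f.scale)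
  then obtain W where W: "vs1.subspace W" "W \<subseteq> V" and
    KW_sum: "{x + y |x y. x \<in> K \<and> y \<in> W} = V" and KW_Int: "K \<inter> W \<subseteq> {0}"
    using V by (rule vs1.complement_subspace_exists)
  have "vs1.dim (K \<inter> W) = 0" using KW_Int by simp
  then have "vs1.dim V = vs1.dim K + vs1.dim W"
    using vs1.dim_sums_Int[OF K(1) W(1), unfolded KW_sum] by linarith
  moreover have "inj_on f W"
    using W KW_Int by (subst f.inj_on_iff_eq_0) (auto simp: K_def)
  with W(1) have "vs2.dim (f ` W) = vs1.dim W"
    using dim_image_eq[OF f] vs1.span_eq_iff by metis
  moreover have "f ` V = f ` W"
  proof
    show "f ` V \<subseteq> f ` W"
      unfolding KW_sum[symmetric] by (auto simp: K_def f.add)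
  qed (use W(2) in blast)
  ultimately show ?thesis by (simp add: K_def)
qed

end

definition coord_subspace :: "'n set \<Rightarrow> ('a::zero ^ 'n) set" where
  "coord_subspace \<sigma> = {x. \<forall>i. i \<notin> \<sigma> \<longrightarrow> x $ i = 0}"

lemma Supp_subset_iff: "Supp X \<subseteq> \<sigma> \<longleftrightarrow> X \<subseteq> coord_subspace \<sigma>"
  by (auto simp: Supp_def coord_subspace_def)

lemma coord_subspace_mono: "\<sigma> \<subseteq> \<tau> \<Longrightarrow> coord_subspace \<sigma> \<subseteq> coord_subspace \<tau>"
  by (auto simp: coord_subspace_def)

lemma subspace_coord_subspace: "vec.subspace (coord_subspace \<sigma> :: ('a::field ^ 'n) set)"
  by (auto simp: vec.subspace_def coord_subspace_def)

lemma matrix_vector_mult_axis: "(H :: 'a::field ^ 'n ^ 'm) *v axis j 1 = column j H"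
  by (simp add: vec_eq_iff matrix_vector_mult_def column_def axis_def)
     (simp add: if_distrib[of "\<lambda>x. _ * x"] cong: if_cong)

lemma matrix_vector_mult_coord_subspace:
  fixes H :: "'a::field ^ 'n ^ 'm"
  shows "(*v) H ` coord_subspace \<sigma> = vec.span ((\<lambda>j. column j H) ` \<sigma>)"
proof
  show "(*v) H ` coord_subspace \<sigma> \<subseteq> vec.span ((\<lambda>j. column j H) ` \<sigma>)"
  proof
    fix z assume "z \<in> (*v) H ` coord_subspace \<sigma>"
    then obtain x where x: "x \<in> coord_subspace \<sigma>" "z = H *v x" by blast
    have "z = (\<Sum>i\<in>\<sigma>. x $ i *s column i H)"
      unfolding x(2) matrix_mult_sum
      using x(1) by (intro sum.mono_neutral_right) (auto simp: coord_subspace_def)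
    also have "\<dots> \<in> vec.span ((\<lambda>j. column j H) ` \<sigma>)"
      by (intro vec.span_sum vec.span_scale vec.span_base) auto
    finally show "z \<in> vec.span ((\<lambda>j. column j H) ` \<sigma>)" .
  qed
  have "axis j 1 \<in> coord_subspace \<sigma>" if "j \<in> \<sigma>" for j :: 'n
    using that by (auto simp: coord_subspace_def axis_def)
  then have "(\<lambda>j. column j H) ` \<sigma> \<subseteq> (*v) H ` coord_subspace \<sigma>"
    by (auto simp flip: matrix_vector_mult_axis)
  then show "vec.span ((\<lambda>j. column j H) ` \<sigma>) \<subseteq> (*v) H ` coord_subspace \<sigma>"
    by (intro vec.span_minimal vec.subspace_image subspace_coord_subspace)
qed

lemma mrank_eq_dim_columns:
  fixes H :: "'a::field ^ 'n::finite ^ 'm"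
  shows "mrank H \<sigma> = vec.dim ((\<lambda>j. column j H) ` \<sigma>)"
  unfolding mrank_def
proof (rule Max_eqI)
  let ?c = "\<lambda>j. column j H"
  show "finite {card \<tau> |\<tau>. \<tau> \<subseteq> \<sigma> \<and> mindep H \<tau>}" by simp
  show "y \<le> vec.dim (?c ` \<sigma>)" if "y \<in> {card \<tau> |\<tau>. \<tau> \<subseteq> \<sigma> \<and> mindep H \<tau>}" for y
  proof -
    from that obtain \<tau> where \<tau>: "y = card \<tau>" "\<tau> \<subseteq> \<sigma>" "mindep H \<tau>" by blast
    then have "y = card (?c ` \<tau>)" by (simp add: mindep_def card_image)
    also have "\<dots> \<le> vec.dim (?c ` \<sigma>)"
      using \<tau> unfolding mindep_def by (intro vec.independent_card_le_dim) blast+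
    finally show ?thesis .
  qed
  obtain B where B: "B \<subseteq> ?c ` \<sigma>" "vec.independent B" "?c ` \<sigma> \<subseteq> vec.span B"
    "card B = vec.dim (?c ` \<sigma>)"
    by (rule vec.basis_exists)
  obtain \<tau> where \<tau>: "\<tau> \<subseteq> \<sigma>" "inj_on ?c \<tau>" "B = ?c ` \<tau>"
    using subset_image_inj[THEN iffD1, OF B(1)] by blast
  have "mindep H \<tau>" using \<tau> B(2) by (simp add: mindep_def)
  moreover have "card \<tau> = vec.dim (?c ` \<sigma>)" using \<tau> B(4) by (simp add: card_image)
  ultimately show "vec.dim (?c ` \<sigma>) \<in> {card \<tau> |\<tau>. \<tau> \<subseteq> \<sigma> \<and> mindep H \<tau>}"
    using \<tau>(1) by (intro CollectI exI[of _ \<tau>]) simp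
qed

lemma nullity_eq_dim_kernel:
  fixes H :: "'a::field ^ 'n::finite ^ 'm"
  shows "nullity H \<sigma> = vec.dim {c \<in> coord_subspace \<sigma>. H *v c = 0}"
proof -
  have "card \<sigma> = vec.dim (coord_subspace \<sigma> :: ('a ^ 'n) set)"
    by (simp add: coord_subspace_def dim_substandard_cart)
  also have "\<dots> = vec.dim {c \<in> coord_subspace \<sigma>. H *v c = 0} + mrank H \<sigma>"
    using vec.rank_nullity[OF matrix_vector_mul_linear_gen subspace_coord_subspace]
    by (simp add: matrix_vector_mult_coord_subspace mrank_eq_dim_columns)
  finally show ?thesis unfolding nullity_def by simp
qed

lemma card_subspace_eq_mult_card_zero_coord:
  fixes D :: "('a::{field,finite} ^ 'n) set"
  assumes D: "vec.subspace D" and x: "x \<in> Supp D"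
  shows "card D = CARD('a) * card {d\<in>D. d $ x = 0}"
proof -
  obtain d0 where d0: "d0 \<in> D" "d0 $ x \<noteq> 0" using x by (auto simp: Supp_def)
  define e where "e = inverse (d0 $ x) *s d0"
  have e: "e \<in> D" "e $ x = 1"
    using D d0 by (simp_all add: e_def vec.subspace_scale)
  have "bij_betw (\<lambda>(t, y). y + t *s e) (UNIV \<times> {d\<in>D. d $ x = 0}) D"
  proof (rule bij_betw_byWitness[where f' = "\<lambda>d. (d $ x, d - d $ x *s e)"])
    show "(\<lambda>(t, y). y + t *s e) ` (UNIV \<times> {d\<in>D. d $ x = 0}) \<subseteq> D"
      using D e by (auto intro: vec.subspace_add vec.subspace_scale)
    show "(\<lambda>d. (d $ x, d - d $ x *s e)) ` D \<subseteq> UNIV \<times> {d\<in>D. d $ x = 0}"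
      using D e by (auto intro: vec.subspace_diff vec.subspace_scale)
  qed (use e in auto)
  then show ?thesis
    by (simp add: bij_betw_same_card[symmetric] card_cartesian_product)
qed

lemma sum_wt_subspace:
  fixes D :: "('a::{field,finite} ^ 'n::finite) set"
  assumes D: "vec.subspace D"
  shows "CARD('a) * (\<Sum>d\<in>D. wt d) = (CARD('a) - 1) * card D * card (Supp D)"
proof -
  have "(\<Sum>d\<in>D. wt d) = (\<Sum>d\<in>D. \<Sum>j\<in>UNIV. if d $ j \<noteq> 0 then 1 else 0)"
    by (simp add: wt_def sum.If_cases Int_def)
  also have "\<dots> = (\<Sum>j\<in>UNIV. card {d\<in>D. d $ j \<noteq> 0})"
    by (subst sum.swap) (simp add: sum.If_cases Int_def)
  also have "\<dots> = (\<Sum>j\<in>Supp D. card {d\<in>D. d $ j \<noteq> 0})"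
    by (intro sum.mono_neutral_right) (auto simp: Supp_def)
  finally have wt_sum: "(\<Sum>d\<in>D. wt d) = (\<Sum>j\<in>Supp D. card {d\<in>D. d $ j \<noteq> 0})" .
  have "CARD('a) * card {d\<in>D. d $ j \<noteq> 0} = (CARD('a) - 1) * card D" if "j \<in> Supp D" for j
  proof -
    have "card D = card {d\<in>D. d $ j \<noteq> 0} + card {d\<in>D. d $ j = 0}"
      by (subst card_Un_disjoint[symmetric]) (auto intro: arg_cong[where f=card])
    then show ?thesis
      using card_subspace_eq_mult_card_zero_coord[OF D that]
      by (simp add: algebra_simps diff_mult_distrib)
  qed
  then show ?thesis
    by (simp add: wt_sum sum_distrib_left)
qed

lemma eq_if_mult_pred_eq:
  fixes a b m m' :: nat
  assumes e: "a * (m - 1) = b * m" "a * (m' - 1) = b * m'" and "0 < m" "0 < m'" "0 < a"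
  shows "m = m'"
proof -
  have "int a * (int m - 1) = int b * int m" "int a * (int m' - 1) = int b * int m'"
    using arg_cong[OF e(1), of int] arg_cong[OF e(2), of int] \<open>0 < m\<close> \<open>0 < m'\<close>
    by (simp_all add: of_nat_diff)
  then have "(int a - int b) * (int m - int m') = 0" "int a \<noteq> int b"
    using \<open>0 < a\<close> by (auto simp: algebra_simps)
  then show ?thesis by simp
qed

lemma subcode_eq_if_Supp_subset:
  fixes C :: "('a::{field,finite} ^ 'n::finite) set"
  assumes cw: "constant_weight C"
    and D: "vec.subspace D" and D': "vec.subspace D'"
    and DD': "D \<subseteq> D'" and D'C: "D' \<subseteq> C" and Supp: "Supp D' \<subseteq> Supp D"
  shows "D = D'"
proof (rule ccontr)
  assume "D \<noteq> D'"
  then obtain d0 where d0: "d0 \<in> D'" "d0 \<notin> D" using DD' by blast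
  with D have "d0 \<noteq> 0" by (auto simp: vec.subspace_0)
  define w where "w = wt d0"
  have "0 < CARD('a) * w"
    using \<open>d0 \<noteq> 0\<close> by (auto simp: w_def wt_def card_gt_0_iff vec_eq_iff)
  \<comment> \<open>Holds for \<open>E = D\<close> and \<open>E = D'\<close> alike; as \<open>m \<mapsto> (m - 1) / m\<close> is injective, \<open>card D = card D'\<close>.\<close>
  have count: "CARD('a) * w * (card E - 1) = (CARD('a) - 1) * card (Supp D) * card E"
    if E: "vec.subspace E" "E \<subseteq> D'" "Supp E = Supp D" for E
  proof -
    have "0 \<in> E" using E(1) by (simp add: vec.subspace_0)
    have "wt d = w" if "d \<in> E" "d \<noteq> 0" for d
      using cw E(2) D'C d0 \<open>d0 \<noteq> 0\<close> that unfolding constant_weight_def w_def by blast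
    then have "(\<Sum>d\<in>E. wt d) = (\<Sum>d\<in>E - {0}. w)"
      by (intro sum.mono_neutral_cong_right) (auto simp: wt_def)
    then show ?thesis
      using sum_wt_subspace[OF E(1)] \<open>0 \<in> E\<close> E(3) by (simp add: card_Diff_singleton ac_simps)
  qed
  have "Supp D' = Supp D"
    using DD' Supp by (auto simp: Supp_def)
  have "0 < card D" "0 < card D'"
    using D D' by (auto simp: card_gt_0_iff dest: vec.subspace_0)
  then have "card D = card D'"
    using eq_if_mult_pred_eq[OF count[OF D DD' refl] count[OF D' order_refl \<open>Supp D' = Supp D\<close>]]
      \<open>0 < CARD('a) * w\<close> by blast
  then show False
    using DD' \<open>D \<noteq> D'\<close> by (simp add: card_subset_eq)
qed

lemma nullity_eq_dim_restriction:
  fixes H :: "'a::field ^ 'n::finite ^ 'm"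
  assumes ker: "\<And>c. c \<in> C \<longleftrightarrow> H *v c = 0"
  shows "nullity H \<sigma> = vec.dim (C \<inter> coord_subspace \<sigma>)"
proof -
  have "{c \<in> coord_subspace \<sigma>. H *v c = 0} = C \<inter> coord_subspace \<sigma>"
    using ker by blast
  then show ?thesis by (simp add: nullity_eq_dim_kernel)
qed

lemma N_subset_Supp_subcodes:
  fixes C :: "('a::field ^ 'n::finite) set" and H :: "'a ^ 'n ^ 'm"
  assumes C: "vec.subspace C" and ker: "\<And>c. c \<in> C \<longleftrightarrow> H *v c = 0"
  shows "N H i \<subseteq> {Supp D |D. vec.subspace D \<and> D \<subseteq> C \<and> vec.dim D = i}"
proof
  fix \<sigma> assume "\<sigma> \<in> N H i"
  then have nullity: "nullity H \<sigma> = i" and minimal: "\<And>\<tau>. \<tau> \<subset> \<sigma> \<Longrightarrow> nullity H \<tau> \<noteq> i"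
    by (auto simp: N_def)
  define D where "D = C \<inter> coord_subspace \<sigma>"
  have D: "vec.subspace D" "D \<subseteq> C" "vec.dim D = i"
    using C nullity by (auto simp: D_def nullity_eq_dim_restriction[OF ker]
        intro: vec.subspace_inter subspace_coord_subspace)
  have "Supp D \<subseteq> \<sigma>" by (simp add: D_def Supp_subset_iff)
  moreover have "C \<inter> coord_subspace (Supp D) = D"
    using Supp_subset_iff[of D "Supp D"] coord_subspace_mono[OF \<open>Supp D \<subseteq> \<sigma>\<close>]
    by (auto simp: D_def)
  then have "nullity H (Supp D) = i"
    using D(3) by (simp add: nullity_eq_dim_restriction[OF ker])
  ultimately have "Supp D = \<sigma>"
    using minimal by blast
  with D show "\<sigma> \<in> {Supp D |D. vec.subspace D \<and> D \<subseteq> C \<and> vec.dim D = i}"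
    by blast
qed

lemma Supp_subcode_mem_N:
  fixes C :: "('a::{field,finite} ^ 'n::finite) set" and H :: "'a ^ 'n ^ 'm"
  assumes C: "vec.subspace C" and cw: "constant_weight C"
    and ker: "\<And>c. c \<in> C \<longleftrightarrow> H *v c = 0"
    and D: "vec.subspace D" "D \<subseteq> C" "vec.dim D = i"
  shows "Supp D \<in> N H i"
proof -
  let ?C = "\<lambda>\<sigma>. C \<inter> coord_subspace \<sigma>"
  have subspace_restriction: "vec.subspace (?C \<sigma>)" for \<sigma>
    using C by (intro vec.subspace_inter subspace_coord_subspace)
  have "D = ?C (Supp D)"
  proof (rule subcode_eq_if_Supp_subset[OF cw D(1) subspace_restriction])
    show "D \<subseteq> ?C (Supp D)" using D(2) Supp_subset_iff[of D "Supp D"] by blast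
    show "Supp (?C (Supp D)) \<subseteq> Supp D" by (simp add: Supp_subset_iff)
  qed auto
  have "nullity H \<tau> \<noteq> i" if "\<tau> \<subset> Supp D" for \<tau>
  proof
    assume "nullity H \<tau> = i"
    then have "vec.dim (?C \<tau>) \<ge> vec.dim D"
      using D(3) by (simp add: nullity_eq_dim_restriction[OF ker])
    moreover have "?C \<tau> \<subseteq> D"
      using \<open>D = ?C (Supp D)\<close> coord_subspace_mono[of \<tau> "Supp D"] that by blast
    ultimately have "?C \<tau> = D"
      by (intro vec.subspace_dim_equal subspace_restriction D(1))
    then have "Supp D \<subseteq> \<tau>" by (metis Int_lower2 Supp_subset_iff)
    with that show False by blast
  qed
  moreover have "nullity H (Supp D) = i"
    using D(3) \<open>D = ?C (Supp D)\<close> by (simp add: nullity_eq_dim_restriction[OF ker])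
  ultimately show ?thesis by (simp add: N_def)
qed

theorem proposition3:
  fixes C :: "('a::{field,finite} ^ 'n) set"
    and H :: "'a ^ 'n ^ 'm"
    and k i :: nat
  assumes "vec.subspace C"
    and "vec.dim C = k"
    and "constant_weight C"
    and "\<And>c. c \<in> C \<longleftrightarrow> H *v c = 0"
    and "i \<le> k"
  shows "N H i = {Supp D | D. vec.subspace D \<and> D \<subseteq> C \<and> vec.dim D = i}"
proof
  show "N H i \<subseteq> {Supp D | D. vec.subspace D \<and> D \<subseteq> C \<and> vec.dim D = i}"
    using N_subset_Supp_subcodes assms(1,4) by blast
  show "{Supp D | D. vec.subspace D \<and> D \<subseteq> C \<and> vec.dim D = i} \<subseteq> N H i"
    using Supp_subcode_mem_N[OF assms(1,3,4)] by blast
qed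

end
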